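(* For $n\ge1$, the number of equivalence classes of period configurations of Parallel Diffusion on the labelled complete graph $K_n$ (vertex set $\{1,\dots,n\}$) equals $$\sum_{(B_1,\dots,B_N)}\ \prod_{i=2}^{N}\bigl(|B_{i-1}|+|B_i|-1\bigr),$$ where the sum runs over all ordered set partitions $(B_1,\dots,B_N)$ of $\{1,\dots,n\}$ into nonempty blocks (any $N\ge1$), and the empty product (for $N=1$) equals $1$.
   Context: Parallel Diffusion on a graph $G$: a configuration assigns an integer stack size $|v|$ to each vertex. One firing step replaces every stack size simultaneously by $|v| + \#\{u\in N(v): |u|>|v|\} - \#\{u\in N(v): |u|<|v|\}$. A period configuration is a configuration $D$ such that repeated firing starting from $D$ returns to $D$ after some positive number of steps. Two configurations on the same labelled graph are equivalent if one is obtained from the other by adding the same integer to every vertex's stack size. (The ordered partition $(B_1,\dots,B_N)$ records which vertices share each of the $N$ distinct stack sizes, listed in increasing order of stack size.) *)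

theory Defs
  imports Main
begin

text \<open>Labelled complete graph K_n on vertex set {1..n}; a configuration is an integer
  stack size for each vertex, represented as a function nat => int that is 0 off {1..n}.\<close>

definition configs :: "nat \<Rightarrow> (nat \<Rightarrow> int) set" where
  "configs n = {D. \<forall>i. i \<notin> {1..n} \<longrightarrow> D i = 0}"

definition nbrs :: "nat \<Rightarrow> nat \<Rightarrow> nat set" where
  "nbrs n v = {1..n} - {v}"

definition fire :: "nat \<Rightarrow> (nat \<Rightarrow> int) \<Rightarrow> (nat \<Rightarrow> int)" where
  "fire n D = (\<lambda>v. if v \<in> {1..n} then
       D v + int (card {u \<in> nbrs n v. D u > D v}) - int (card {u \<in> nbrs n v. D u < D v})
     else 0)"

definition period_config :: "nat \<Rightarrow> (nat \<Rightarrow> int) \<Rightarrow> bool" where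
  "period_config n D \<longleftrightarrow> D \<in> configs n \<and> (\<exists>k>0. (fire n ^^ k) D = D)"

definition config_equiv :: "nat \<Rightarrow> ((nat \<Rightarrow> int) \<times> (nat \<Rightarrow> int)) set" where
  "config_equiv n = {(D, D'). D \<in> configs n \<and> D' \<in> configs n \<and>
       (\<exists>c::int. \<forall>v\<in>{1..n}. D' v = D v + c)}"

definition ordered_set_partitions :: "'a set \<Rightarrow> 'a set list set" where
  "ordered_set_partitions S = {bs. (\<forall>B\<in>set bs. B \<noteq> {}) \<and>
       (\<forall>i<length bs. \<forall>j<length bs. i \<noteq> j \<longrightarrow> bs ! i \<inter> bs ! j = {}) \<and>
       \<Union>(set bs) = S}"

end

theory Submission
  imports Defs "HOL-Library.FuncSet"
begin

text \<open>Firing subtracts from every stack its imbalance, the number of smaller minus the number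
  of larger stacks. By a rearrangement inequality the energy \<open>\<langle>D, fire D\<rangle>\<close> never increases
  along an orbit, and on a periodic orbit its constancy forces every firing to reverse the strict
  order of the stacks; conversely, an order-reversing firing negates all imbalances, so the next
  firing undoes it. For \<open>D u < D v\<close>, order reversal is the gap condition
  \<open>D v - D u < #{w. D u \<le> D w < D v} + #{w. D u < D w \<le> D v}\<close>. Normalising the minimum to 0
  and listing the value blocks \<open>B_1, \<dots>, B_N\<close> in increasing order, it says precisely that the
  consecutive gaps satisfy \<open>1 \<le> h_i \<le> |B_(i-1)| + |B_i| - 1\<close>; the conditions for non-adjacent
  values follow by summing these. So classes correspond to pairs of an ordered set partition and
  an admissible gap vector.\<close>

section \<open>Firing and imbalance\<close>

definition imbalance :: "nat \<Rightarrow> (nat \<Rightarrow> int) \<Rightarrow> nat \<Rightarrow> int" where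
  "imbalance n x v = (\<Sum>u\<in>{1..n}. sgn (x v - x u))"

lemma imbalance_eq_card:
  "imbalance n x v = int (card {u\<in>{1..n}. x u < x v}) - int (card {u\<in>{1..n}. x u > x v})"
proof -
  have "imbalance n x v = (\<Sum>u\<in>{1..n}. (of_bool (x u < x v) - of_bool (x u > x v) :: int))"
    unfolding imbalance_def by (rule sum.cong) (auto simp: sgn_if)
  also have "\<dots> = int (card ({1..n} \<inter> {u. x u < x v})) - int (card ({1..n} \<inter> {u. x u > x v}))"
    by (simp add: sum_subtractf)
  finally show ?thesis by (simp add: Int_def conj_commute)
qed

lemma fire_eq_imbalance:
  assumes v: "v \<in> {1..n}"
  shows "fire n D v = D v - imbalance n D v"
proof -
  have nbrs_greater: "{u \<in> nbrs n v. D u > D v} = {u\<in>{1..n}. D u > D v}"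
    unfolding nbrs_def by auto
  have nbrs_less: "{u \<in> nbrs n v. D u < D v} = {u\<in>{1..n}. D u < D v}"
    unfolding nbrs_def by auto
  show ?thesis using v unfolding fire_def nbrs_greater nbrs_less imbalance_eq_card by simp
qed

lemma fire_outside: "v \<notin> {1..n} \<Longrightarrow> fire n D v = 0"
  by (auto simp: fire_def)

lemma imbalance_uminus: "imbalance n (\<lambda>v. - x v) = (\<lambda>v. - imbalance n x v)"
  unfolding imbalance_def fun_eq_iff by (simp add: sum_negf[symmetric] sgn_minus[symmetric] algebra_simps)

lemma imbalance_sgn_cong:
  assumes "\<And>u. u \<in> {1..n} \<Longrightarrow> sgn (y v - y u) = sgn (x v - x u)"
  shows "imbalance n y v = imbalance n x v"
  unfolding imbalance_def using assms by (intro sum.cong) auto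

section \<open>The energy of an orbit\<close>

definition dotp :: "nat \<Rightarrow> (nat \<Rightarrow> int) \<Rightarrow> (nat \<Rightarrow> int) \<Rightarrow> int" where
  "dotp n x z = (\<Sum>v\<in>{1..n}. x v * z v)"

lemma dotp_uminus_left: "dotp n (\<lambda>v. - x v) z = - dotp n x z"
  by (simp add: dotp_def sum_negf)

lemma double_dotp_imbalance:
  "2 * dotp n (imbalance n x) z = (\<Sum>v\<in>{1..n}. \<Sum>u\<in>{1..n}. sgn (x v - x u) * (z v - z u))"
proof -
  let ?V = "{1..n}"
  have "(\<Sum>v\<in>?V. \<Sum>u\<in>?V. sgn (x v - x u) * z u) = (\<Sum>u\<in>?V. \<Sum>v\<in>?V. sgn (x v - x u) * z u)"
    by (rule sum.swap)
  also have "\<dots> = - (\<Sum>u\<in>?V. \<Sum>v\<in>?V. sgn (x u - x v) * z u)"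
  proof -
    have "\<And>u v. sgn (x v - x u) * z u = - (sgn (x u - x v) * z u)" by (simp add: sgn_if)
    thus ?thesis by (simp only: sum_negf)
  qed
  finally have swap: "(\<Sum>v\<in>?V. \<Sum>u\<in>?V. sgn (x v - x u) * z u)
      = - (\<Sum>v\<in>?V. \<Sum>u\<in>?V. sgn (x v - x u) * z v)" .
  have "(\<Sum>v\<in>?V. \<Sum>u\<in>?V. sgn (x v - x u) * (z v - z u))
      = (\<Sum>v\<in>?V. \<Sum>u\<in>?V. sgn (x v - x u) * z v) - (\<Sum>v\<in>?V. \<Sum>u\<in>?V. sgn (x v - x u) * z u)"
    by (simp add: right_diff_distrib sum_subtractf)
  also have "\<dots> = 2 * dotp n (imbalance n x) z"
    unfolding swap dotp_def imbalance_def by (simp add: sum_distrib_right)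
  finally show ?thesis by simp
qed

lemma sgn_mult_le_sgn_mult_self: "sgn (a::int) * b \<le> sgn b * b"
  by (auto simp: sgn_if)

lemma dotp_imbalance_le: "dotp n (imbalance n x) z \<le> dotp n (imbalance n z) z"
proof -
  have "2 * dotp n (imbalance n x) z \<le> 2 * dotp n (imbalance n z) z"
    unfolding double_dotp_imbalance by (intro sum_mono sgn_mult_le_sgn_mult_self)
  thus ?thesis by simp
qed

lemma dotp_imbalance_eq_imp_less:
  assumes eq: "dotp n (imbalance n x) z = dotp n (imbalance n z) z"
    and u: "u \<in> {1..n}" and v: "v \<in> {1..n}" and less: "z u < z v"
  shows "x u < x v"
proof -
  let ?V = "{1..n}"
  let ?t = "\<lambda>v u. sgn (z v - z u) * (z v - z u) - sgn (x v - x u) * (z v - z u)"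
  have nonneg: "\<And>v u. 0 \<le> ?t v u" by (simp add: sgn_mult_le_sgn_mult_self)
  have "(\<Sum>v\<in>?V. \<Sum>u\<in>?V. ?t v u) = 2 * dotp n (imbalance n z) z - 2 * dotp n (imbalance n x) z"
    unfolding double_dotp_imbalance by (simp add: sum_subtractf)
  hence "(\<Sum>v\<in>?V. \<Sum>u\<in>?V. ?t v u) = 0" using eq by simp
  hence "(\<Sum>u\<in>?V. ?t v u) = 0"
    using v by (subst (asm) sum_nonneg_eq_0_iff) (auto intro: sum_nonneg nonneg)
  hence "?t v u = 0" using u by (subst (asm) sum_nonneg_eq_0_iff) (auto simp: sgn_mult_le_sgn_mult_self)
  thus ?thesis using less by (auto simp: sgn_if split: if_splits)
qed

lemma energy_decrease:
  fixes n :: nat and D :: "nat \<Rightarrow> int"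
  defines "D' \<equiv> fire n D"
  shows "dotp n D D' - dotp n D' (fire n D')
    = dotp n (imbalance n D') D' - dotp n (imbalance n (\<lambda>v. - D v)) D'"
proof -
  have "dotp n D D' - dotp n D' (fire n D')
      = (\<Sum>v\<in>{1..n}. D' v * (imbalance n D v + imbalance n D' v))"
    unfolding dotp_def sum_subtractf[symmetric]
    by (intro sum.cong refl) (simp add: D'_def fire_eq_imbalance algebra_simps)
  also have "\<dots> = dotp n (imbalance n D) D' + dotp n (imbalance n D') D'"
    by (simp add: dotp_def algebra_simps sum.distrib)
  finally show ?thesis
    using dotp_uminus_left[of n "imbalance n D" D'] by (simp add: imbalance_uminus)
qed

lemma energy_antimono: "dotp n (fire n D) (fire n (fire n D)) \<le> dotp n D (fire n D)"
  using energy_decrease[of n D] dotp_imbalance_le[of n "\<lambda>v. - D v" "fire n D"] by linarith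

lemma energy_eq_imp_reversal:
  assumes "dotp n (fire n D) (fire n (fire n D)) = dotp n D (fire n D)"
    and "u \<in> {1..n}" "v \<in> {1..n}" "fire n D u < fire n D v"
  shows "D v < D u"
proof -
  have "dotp n (imbalance n (\<lambda>v. - D v)) (fire n D) = dotp n (imbalance n (fire n D)) (fire n D)"
    using energy_decrease[of n D] dotp_imbalance_le[of n "\<lambda>v. - D v" "fire n D"] assms(1)
    by linarith
  from dotp_imbalance_eq_imp_less[OF this assms(2-4)] show ?thesis by simp
qed

lemma period_config_energy_const:
  assumes "period_config n D"
  shows "dotp n (fire n D) (fire n (fire n D)) = dotp n D (fire n D)"
proof -
  obtain k where k: "k > 0" "(fire n ^^ k) D = D"
    using assms unfolding period_config_def by blast
  define Q where "Q t = dotp n ((fire n ^^ t) D) ((fire n ^^ Suc t) D)" for t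
  have antimono: "Q (Suc t) \<le> Q t" for t
    using energy_antimono[of n "(fire n ^^ t) D"] by (simp add: Q_def)
  have "Q k \<le> Q 1" "Q 1 \<le> Q 0"
    using k(1) by (auto intro!: lift_Suc_antimono_le[of Q] antimono)
  moreover have "Q k = Q 0"
    unfolding Q_def using k(2) by (simp add: funpow_swap1)
  ultimately show ?thesis by (simp add: Q_def)
qed

section \<open>Period configurations are the order-reversing ones\<close>

lemma fire_eq_if_eq:
  "u \<in> {1..n} \<Longrightarrow> v \<in> {1..n} \<Longrightarrow> D u = D v \<Longrightarrow> fire n D u = fire n D v"
  by (simp add: fire_eq_imbalance imbalance_def)

lemma funpow_fire_eq_if_eq:
  "u \<in> {1..n} \<Longrightarrow> v \<in> {1..n} \<Longrightarrow> D u = D v \<Longrightarrow> (fire n ^^ t) D u = (fire n ^^ t) D v"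
  by (induction t) (auto intro: fire_eq_if_eq)

lemma period_config_fire_injective:
  assumes "period_config n D" "u \<in> {1..n}" "v \<in> {1..n}" "fire n D u = fire n D v"
  shows "D u = D v"
proof -
  obtain k where k: "k > 0" "(fire n ^^ k) D = D"
    using assms(1) unfolding period_config_def by blast
  have "(fire n ^^ k) D = (fire n ^^ (k - 1)) (fire n D)"
    using k(1) by (metis Suc_diff_1 funpow_Suc_right o_apply)
  with funpow_fire_eq_if_eq[OF assms(2-4)] k(2) show ?thesis by metis
qed

definition order_reversing :: "nat \<Rightarrow> (nat \<Rightarrow> int) \<Rightarrow> bool" where
  "order_reversing n D \<longleftrightarrow> (\<forall>u\<in>{1..n}. \<forall>v\<in>{1..n}. D u < D v \<longrightarrow> fire n D v < fire n D u)"

lemma period_config_imp_order_reversing: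
  assumes "period_config n D"
  shows "order_reversing n D"
  unfolding order_reversing_def
proof (intro ballI impI)
  fix u v assume u: "u \<in> {1..n}" and v: "v \<in> {1..n}" and less: "D u < D v"
  have "fire n D u \<noteq> fire n D v"
    using period_config_fire_injective[OF assms u v] less by auto
  moreover have "\<not> fire n D u < fire n D v"
    using energy_eq_imp_reversal[OF period_config_energy_const[OF assms] u v] less by auto
  ultimately show "fire n D v < fire n D u" by simp
qed

text \<open>Reversing the order flips the sign of every imbalance, so the second step undoes the first.\<close>

lemma order_reversing_fire_fire:
  assumes "D \<in> configs n" "order_reversing n D"
  shows "fire n (fire n D) = D"
proof
  fix v
  show "fire n (fire n D) v = D v"
  proof (cases "v \<in> {1..n}")
    case True
    have "sgn (fire n D v - fire n D u) = sgn (D u - D v)" if u: "u \<in> {1..n}" for u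
    proof (cases "D u" "D v" rule: linorder_cases)
      case less
      with assms(2) u True have "fire n D v < fire n D u" by (auto simp: order_reversing_def)
      with less show ?thesis by (simp add: sgn_if)
    next
      case equal
      with fire_eq_if_eq[OF u True] show ?thesis by simp
    next
      case greater
      with assms(2) u True have "fire n D u < fire n D v" by (auto simp: order_reversing_def)
      with greater show ?thesis by (simp add: sgn_if)
    qed
    hence "imbalance n (fire n D) v = imbalance n (\<lambda>v. - D v) v"
      by (intro imbalance_sgn_cong) simp
    with True show ?thesis by (simp add: fire_eq_imbalance imbalance_uminus)
  next
    case False
    with assms(1) show ?thesis by (simp add: fire_outside configs_def)
  qed
qed

lemma period_config_iff_order_reversing:
  "period_config n D \<longleftrightarrow> D \<in> configs n \<and> order_reversing n D"
proof
  assume "D \<in> configs n \<and> order_reversing n D"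
  hence "(fire n ^^ 2) D = D" using order_reversing_fire_fire by (simp add: numeral_2_eq_2)
  with \<open>D \<in> configs n \<and> order_reversing n D\<close> show "period_config n D"
    unfolding period_config_def by (intro conjI exI[of _ 2]) auto
qed (use period_config_imp_order_reversing period_config_def in blast)

definition interval_weight :: "nat \<Rightarrow> (nat \<Rightarrow> int) \<Rightarrow> int \<Rightarrow> int \<Rightarrow> int" where
  "interval_weight n D a b =
     int (card {w\<in>{1..n}. a \<le> D w \<and> D w < b}) + int (card {w\<in>{1..n}. a < D w \<and> D w \<le> b})"

lemma imbalance_diff_eq_interval_weight:
  assumes "D u < D v"
  shows "imbalance n D v - imbalance n D u = interval_weight n D (D u) (D v)"
proof -
  have "imbalance n D v - imbalance n D u =
      (\<Sum>w\<in>{1..n}. (of_bool (D u \<le> D w \<and> D w < D v) + of_bool (D u < D w \<and> D w \<le> D v) :: int))"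
    unfolding imbalance_def sum_subtractf[symmetric] using assms
    by (intro sum.cong refl) (auto simp: sgn_if)
  also have "\<dots> = int (card ({1..n} \<inter> {w. D u \<le> D w \<and> D w < D v}))
                 + int (card ({1..n} \<inter> {w. D u < D w \<and> D w \<le> D v}))"
    by (simp add: sum.distrib)
  finally show ?thesis by (simp add: interval_weight_def Int_def conj_commute)
qed

lemma order_reversing_iff_gap:
  "order_reversing n D \<longleftrightarrow>
     (\<forall>u\<in>{1..n}. \<forall>v\<in>{1..n}. D u < D v \<longrightarrow> D v - D u < interval_weight n D (D u) (D v))"
proof -
  have "fire n D v < fire n D u \<longleftrightarrow> D v - D u < interval_weight n D (D u) (D v)"
    if "u \<in> {1..n}" "v \<in> {1..n}" "D u < D v" for u v
    using that imbalance_diff_eq_interval_weight[OF that(3), of n]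
    by (simp add: fire_eq_imbalance, linarith)
  thus ?thesis unfolding order_reversing_def by blast
qed

lemma order_reversing_shift:
  assumes "order_reversing n D"
  shows "order_reversing n (\<lambda>v. if v \<in> {1..n} then D v + c else 0)" (is "order_reversing n ?D")
proof -
  have "imbalance n ?D v = imbalance n D v" if "v \<in> {1..n}" for v
    using that by (intro imbalance_sgn_cong) simp
  hence "fire n ?D v = fire n D v + c" if "v \<in> {1..n}" for v
    using that by (simp add: fire_eq_imbalance)
  with assms show ?thesis by (simp add: order_reversing_def)
qed

section \<open>Ordered set partitions\<close>

lemma ordered_set_partitions_disjoint:
  "bs \<in> ordered_set_partitions S \<Longrightarrow> i < length bs \<Longrightarrow> j < length bs \<Longrightarrow> i \<noteq> j \<Longrightarrow>
    bs ! i \<inter> bs ! j = {}"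
  unfolding ordered_set_partitions_def by blast

lemma ordered_set_partitions_nonempty:
  "bs \<in> ordered_set_partitions S \<Longrightarrow> i < length bs \<Longrightarrow> bs ! i \<noteq> {}"
  unfolding ordered_set_partitions_def by auto

lemma ordered_set_partitions_subset:
  "bs \<in> ordered_set_partitions S \<Longrightarrow> i < length bs \<Longrightarrow> bs ! i \<subseteq> S"
  unfolding ordered_set_partitions_def by auto

lemma ordered_set_partitions_cover:
  "bs \<in> ordered_set_partitions S \<Longrightarrow> v \<in> S \<Longrightarrow> \<exists>j<length bs. v \<in> bs ! j"
  unfolding ordered_set_partitions_def by (auto simp: in_set_conv_nth)

lemma length_ordered_set_partition_le:
  assumes "bs \<in> ordered_set_partitions S" "finite S"
  shows "length bs \<le> card S"
proof -
  define f where "f k = (SOME v. v \<in> bs ! k)" for k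
  have f: "f k \<in> bs ! k" if "k < length bs" for k
    unfolding f_def using ordered_set_partitions_nonempty[OF assms(1) that] by (simp add: some_in_eq)
  have "inj_on f {..<length bs}"
  proof (rule inj_onI)
    fix i j assume "i \<in> {..<length bs}" "j \<in> {..<length bs}" "f i = f j"
    thus "i = j" using f[of i] f[of j] ordered_set_partitions_disjoint[OF assms(1), of i j] by auto
  qed
  moreover have "f ` {..<length bs} \<subseteq> S" using f ordered_set_partitions_subset[OF assms(1)] by auto
  ultimately show ?thesis using card_inj_on_le[OF _ _ assms(2)] by fastforce
qed

lemma finite_ordered_set_partitions:
  assumes "finite S"
  shows "finite (ordered_set_partitions S)"
proof (rule finite_subset)
  show "ordered_set_partitions S \<subseteq> {xs. set xs \<subseteq> Pow S \<and> length xs \<le> card S}"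
    using length_ordered_set_partition_le[OF _ assms]
    by (auto simp: ordered_set_partitions_def)
  show "finite {xs. set xs \<subseteq> Pow S \<and> length xs \<le> card S}"
    using finite_lists_length_le[of "Pow S"] assms by simp
qed

definition block_index :: "'a set list \<Rightarrow> 'a \<Rightarrow> nat" where
  "block_index bs v = (THE j. j < length bs \<and> v \<in> bs ! j)"

lemma block_index_eqI:
  assumes "bs \<in> ordered_set_partitions S" "j < length bs" "v \<in> bs ! j"
  shows "block_index bs v = j"
  unfolding block_index_def
proof (rule the_equality)
  show "j < length bs \<and> v \<in> bs ! j" using assms by blast
  fix j' assume "j' < length bs \<and> v \<in> bs ! j'"
  thus "j' = j" using ordered_set_partitions_disjoint[OF assms(1)] assms by blast
qed

lemma block_index_less:
  "bs \<in> ordered_set_partitions S \<Longrightarrow> v \<in> S \<Longrightarrow> block_index bs v < length bs"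
  using ordered_set_partitions_cover block_index_eqI by metis

lemma in_block_index:
  "bs \<in> ordered_set_partitions S \<Longrightarrow> v \<in> S \<Longrightarrow> v \<in> bs ! block_index bs v"
  using ordered_set_partitions_cover block_index_eqI by metis

lemma block_index_eq_iff:
  assumes "bs \<in> ordered_set_partitions S" "j < length bs"
  shows "v \<in> S \<and> block_index bs v = j \<longleftrightarrow> v \<in> bs ! j"
  using in_block_index[OF assms(1)] block_index_eqI[OF assms]
    ordered_set_partitions_subset[OF assms] by auto

lemma card_blocks_union:
  assumes "bs \<in> ordered_set_partitions S" "finite S" "K \<subseteq> {..<length bs}"
  shows "card {w\<in>S. block_index bs w \<in> K} = (\<Sum>k\<in>K. card (bs ! k))"
proof -
  have "{w\<in>S. block_index bs w \<in> K} = (\<Union>k\<in>K. bs ! k)"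
  proof (intro set_eqI iffI)
    fix w assume "w \<in> {w\<in>S. block_index bs w \<in> K}"
    thus "w \<in> (\<Union>k\<in>K. bs ! k)" using in_block_index[OF assms(1)] by blast
  next
    fix w assume "w \<in> (\<Union>k\<in>K. bs ! k)"
    then obtain k where "k \<in> K" "w \<in> bs ! k" by blast
    thus "w \<in> {w\<in>S. block_index bs w \<in> K}"
      using block_index_eq_iff[OF assms(1), of k w] assms(3) by auto
  qed
  moreover have "card (\<Union>k\<in>K. bs ! k) = (\<Sum>k\<in>K. card (bs ! k))"
  proof (rule card_UN_disjoint)
    show "finite K" using assms(3) finite_subset by blast
    show "\<forall>k\<in>K. finite (bs ! k)"
      using assms ordered_set_partitions_subset[OF assms(1)] finite_subset by blast
    show "\<forall>k\<in>K. \<forall>j\<in>K. k \<noteq> j \<longrightarrow> bs ! k \<inter> bs ! j = {}"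
      using assms ordered_set_partitions_disjoint[OF assms(1)] by blast
  qed
  ultimately show ?thesis by simp
qed

section \<open>Normal configurations and gap vectors\<close>

definition gap_vectors :: "'a set list \<Rightarrow> (nat \<Rightarrow> int) set" where
  "gap_vectors bs =
     (\<Pi>\<^sub>E i\<in>{1..<length bs}. {1..int (card (bs ! (i - 1))) + int (card (bs ! i)) - 1})"

definition height :: "(nat \<Rightarrow> int) \<Rightarrow> nat \<Rightarrow> int" where
  "height h j = (\<Sum>i\<in>{1..j}. h i)"

lemma height_0 [simp]: "height h 0 = 0"
  by (simp add: height_def)

lemma height_Suc: "height h (Suc j) = height h j + h (Suc j)"
  by (simp add: height_def)

lemma gap_vectors_bounds:
  assumes "h \<in> gap_vectors bs" "1 \<le> k" "k < length bs"
  shows "1 \<le> h k" "h k < int (card (bs ! (k - 1))) + int (card (bs ! k))"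
  using PiE_mem[OF assms(1)[unfolded gap_vectors_def], of k] assms(2,3) by auto

lemma height_strict_mono:
  assumes "h \<in> gap_vectors bs" "j < j'" "j' < length bs"
  shows "height h j < height h j'"
  using assms(2,3)
proof (induction j')
  case (Suc j')
  have "1 \<le> h (Suc j')" using gap_vectors_bounds(1)[OF assms(1), of "Suc j'"] Suc.prems by simp
  moreover have "height h j \<le> height h j'" using Suc by (cases "j = j'") auto
  ultimately show ?case by (simp add: height_Suc)
qed simp

lemma height_less_iff:
  assumes "h \<in> gap_vectors bs" "j < length bs" "j' < length bs"
  shows "height h j < height h j' \<longleftrightarrow> j < j'"
  using height_strict_mono[OF assms(1) _ assms(2)] height_strict_mono[OF assms(1) _ assms(3)]
  by (metis less_asym linorder_neqE_nat)

lemma height_le_iff: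
  assumes "h \<in> gap_vectors bs" "j < length bs" "j' < length bs"
  shows "height h j \<le> height h j' \<longleftrightarrow> j \<le> j'"
  using height_less_iff[OF assms(1) assms(3) assms(2)] by (simp add: not_less[symmetric])

lemma height_gap:
  assumes "h \<in> gap_vectors bs" "i < j" "j < length bs"
  shows "height h j - height h i + int (j - i) \<le>
     (\<Sum>k\<in>{i..<j}. int (card (bs ! k))) + (\<Sum>k\<in>{Suc i..j}. int (card (bs ! k)))"
  using assms(2,3)
proof (induction j)
  case (Suc j)
  have "h (Suc j) < int (card (bs ! j)) + int (card (bs ! Suc j))"
    using gap_vectors_bounds(2)[OF assms(1), of "Suc j"] Suc.prems by simp
  moreover have "i < j \<Longrightarrow> height h j - height h i + int (j - i) \<le>
     (\<Sum>k\<in>{i..<j}. int (card (bs ! k))) + (\<Sum>k\<in>{Suc i..j}. int (card (bs ! k)))"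
    using Suc by simp
  ultimately show ?case using Suc.prems by (cases "j = i") (auto simp: height_Suc of_nat_diff)
qed simp

definition config_of :: "nat \<Rightarrow> nat set list \<times> (nat \<Rightarrow> int) \<Rightarrow> nat \<Rightarrow> int" where
  "config_of n = (\<lambda>(bs, h) v. if v \<in> {1..n} then height h (block_index bs v) else 0)"

definition normal_configs :: "nat \<Rightarrow> (nat \<Rightarrow> int) set" where
  "normal_configs n = {D \<in> configs n. order_reversing n D \<and> Min (D ` {1..n}) = 0}"

lemma order_reversing_config_of:
  assumes bs: "bs \<in> ordered_set_partitions {1..n}" and h: "h \<in> gap_vectors bs"
  shows "order_reversing n (config_of n (bs, h))" (is "order_reversing n ?D")
  unfolding order_reversing_iff_gap
proof (intro ballI impI)
  fix u v assume u: "u \<in> {1..n}" and v: "v \<in> {1..n}" and less: "?D u < ?D v"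
  define i where "i = block_index bs u"
  define j where "j = block_index bs v"
  have iN: "i < length bs" and jN: "j < length bs"
    using block_index_less[OF bs] u v by (auto simp: i_def j_def)
  have D: "?D w = height h (block_index bs w)" if "w \<in> {1..n}" for w
    using that by (simp add: config_of_def)
  have ij: "i < j" using less D[OF u] D[OF v] height_less_iff[OF h iN jN] by (simp add: i_def j_def)
  have c1: "card {w\<in>{1..n}. block_index bs w \<in> {i..<j}} = (\<Sum>k\<in>{i..<j}. card (bs ! k))"
    by (rule card_blocks_union[OF bs finite_atLeastAtMost]) (use jN in auto)
  have c2: "card {w\<in>{1..n}. block_index bs w \<in> {Suc i..j}} = (\<Sum>k\<in>{Suc i..j}. card (bs ! k))"
    by (rule card_blocks_union[OF bs finite_atLeastAtMost]) (use jN in auto)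
  have s1: "{w\<in>{1..n}. ?D u \<le> ?D w \<and> ?D w < ?D v} = {w\<in>{1..n}. block_index bs w \<in> {i..<j}}"
   and s2: "{w\<in>{1..n}. ?D u < ?D w \<and> ?D w \<le> ?D v} = {w\<in>{1..n}. block_index bs w \<in> {Suc i..j}}"
    using D u v block_index_less[OF bs] height_le_iff[OF h] height_less_iff[OF h] iN jN
    unfolding i_def j_def by auto
  have "interval_weight n ?D (?D u) (?D v) =
      (\<Sum>k\<in>{i..<j}. int (card (bs ! k))) + (\<Sum>k\<in>{Suc i..j}. int (card (bs ! k)))"
    unfolding interval_weight_def s1 s2 c1 c2 of_nat_sum ..
  with height_gap[OF h ij jN] ij D[OF u] D[OF v]
  show "?D v - ?D u < interval_weight n ?D (?D u) (?D v)" by (simp add: i_def j_def)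
qed

lemma Min_config_of:
  assumes n: "n \<ge> 1" and bs: "bs \<in> ordered_set_partitions {1..n}" and h: "h \<in> gap_vectors bs"
  shows "Min (config_of n (bs, h) ` {1..n}) = 0"
proof (rule Min_eqI)
  show "finite (config_of n (bs, h) ` {1..n})" by simp
  obtain j where "j < length bs" using ordered_set_partitions_cover[OF bs, of 1] n by auto
  hence l0: "0 < length bs" by linarith
  have "height h 0 \<le> height h (block_index bs w)" if "w \<in> {1..n}" for w
    using height_le_iff[OF h l0 block_index_less[OF bs that]] by simp
  thus "0 \<le> y" if "y \<in> config_of n (bs, h) ` {1..n}" for y
    using that by (auto simp: config_of_def)
  obtain w where "w \<in> bs ! 0" using ordered_set_partitions_nonempty[OF bs l0] by blast
  hence w: "w \<in> {1..n}" "block_index bs w = 0"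
    using block_index_eq_iff[OF bs l0] by auto
  show "0 \<in> config_of n (bs, h) ` {1..n}"
    by (rule image_eqI[of _ _ w]) (use w in \<open>simp_all add: config_of_def\<close>)
qed

lemma config_of_in_normal_configs:
  assumes "n \<ge> 1" "bs \<in> ordered_set_partitions {1..n}" "h \<in> gap_vectors bs"
  shows "config_of n (bs, h) \<in> normal_configs n"
  using order_reversing_config_of[OF assms(2,3)] Min_config_of[OF assms]
  by (simp add: normal_configs_def configs_def config_of_def)

lemma sorted_wrt_less_nth_less_iff:
  assumes "sorted_wrt (<) (xs :: 'a :: linorder list)" "i < length xs" "j < length xs"
  shows "xs ! i < xs ! j \<longleftrightarrow> i < j"
  using sorted_wrt_nth_less[OF assms(1)] assms(2,3) by (metis less_asym linorder_neqE_nat)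

lemma sorted_wrt_less_nth_le_iff:
  assumes "sorted_wrt (<) (xs :: 'a :: linorder list)" "i < length xs" "j < length xs"
  shows "xs ! i \<le> xs ! j \<longleftrightarrow> i \<le> j"
  using sorted_wrt_less_nth_less_iff[OF assms(1) assms(3) assms(2)] by (simp add: not_less[symmetric])

lemma sorted_wrt_less_between_consecutive:
  assumes s: "sorted_wrt (<) (xs :: 'a :: linorder list)" and i: "1 \<le> i" "i < length xs"
    and x: "x \<in> set xs"
  shows "xs ! (i - 1) \<le> x \<and> x < xs ! i \<longleftrightarrow> x = xs ! (i - 1)"
    and "xs ! (i - 1) < x \<and> x \<le> xs ! i \<longleftrightarrow> x = xs ! i"
proof -
  obtain k where k: "k < length xs" "x = xs ! k" using x by (auto simp: in_set_conv_nth)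
  have i1: "i - 1 < length xs" using i by simp
  have d: "distinct xs" using s strict_sorted_iff by blast
  show "xs ! (i - 1) \<le> x \<and> x < xs ! i \<longleftrightarrow> x = xs ! (i - 1)"
    unfolding k(2) nth_eq_iff_index_eq[OF d k(1) i1] sorted_wrt_less_nth_le_iff[OF s i1 k(1)]
      sorted_wrt_less_nth_less_iff[OF s k(1) i(2)] using i by auto
  show "xs ! (i - 1) < x \<and> x \<le> xs ! i \<longleftrightarrow> x = xs ! i"
    unfolding k(2) nth_eq_iff_index_eq[OF d k(1) i(2)] sorted_wrt_less_nth_less_iff[OF s i1 k(1)]
      sorted_wrt_less_nth_le_iff[OF s k(1) i(2)] using i by auto
qed

definition value_list :: "nat \<Rightarrow> (nat \<Rightarrow> int) \<Rightarrow> int list" where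
  "value_list n D = sorted_list_of_set (D ` {1..n})"

definition blocks_and_gaps :: "nat \<Rightarrow> (nat \<Rightarrow> int) \<Rightarrow> nat set list \<times> (nat \<Rightarrow> int)" where
  "blocks_and_gaps n D =
     (let vs = value_list n D
      in (map (\<lambda>a. {v\<in>{1..n}. D v = a}) vs,
          restrict (\<lambda>i. vs ! i - vs ! (i - 1)) {1..<length vs}))"

lemma value_list_sorted: "sorted_wrt (<) (value_list n D)"
  unfolding value_list_def by (rule strict_sorted_list_of_set)

lemma set_value_list: "set (value_list n D) = D ` {1..n}"
  by (simp add: value_list_def)

lemma value_list_eq_iff:
  "k < length (value_list n D) \<Longrightarrow> m < length (value_list n D) \<Longrightarrow>
    value_list n D ! k = value_list n D ! m \<longleftrightarrow> k = m"
  using value_list_sorted strict_sorted_iff nth_eq_iff_index_eq by blast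

lemma value_list_first:
  assumes "n \<ge> 1" "D \<in> normal_configs n"
  shows "0 < length (value_list n D)" "value_list n D ! 0 = 0"
proof -
  have "D ` {1..n} \<noteq> {}" using assms(1) by auto
  hence "value_list n D = Min (D ` {1..n}) # sorted_list_of_set (D ` {1..n} - {Min (D ` {1..n})})"
    unfolding value_list_def by (intro sorted_list_of_set_nonempty) auto
  thus "0 < length (value_list n D)" "value_list n D ! 0 = 0"
    using assms(2) by (auto simp: normal_configs_def)
qed

lemma blocks_and_gaps_fst:
  "fst (blocks_and_gaps n D) = map (\<lambda>a. {v\<in>{1..n}. D v = a}) (value_list n D)"
  by (simp add: blocks_and_gaps_def Let_def)

lemma blocks_and_gaps_snd:
  "snd (blocks_and_gaps n D) =
     restrict (\<lambda>i. value_list n D ! i - value_list n D ! (i - 1)) {1..<length (value_list n D)}"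
  by (simp add: blocks_and_gaps_def Let_def)

lemma length_blocks_and_gaps [simp]:
  "length (fst (blocks_and_gaps n D)) = length (value_list n D)"
  by (simp add: blocks_and_gaps_fst)

lemma blocks_and_gaps_partition:
  "fst (blocks_and_gaps n D) \<in> ordered_set_partitions {1..n}"
  using value_list_eq_iff[of _ n D] set_value_list[of n D]
  unfolding blocks_and_gaps_fst ordered_set_partitions_def by auto

text \<open>For consecutive values the two sets counted by \<open>interval_weight\<close> are exactly the two
  adjacent blocks.\<close>

lemma blocks_and_gaps_gap_vector:
  assumes "D \<in> normal_configs n"
  shows "snd (blocks_and_gaps n D) \<in> gap_vectors (fst (blocks_and_gaps n D))"
  unfolding gap_vectors_def length_blocks_and_gaps blocks_and_gaps_snd restrict_PiE_iff
proof
  let ?vs = "value_list n D"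
  let ?bs = "fst (blocks_and_gaps n D)"
  fix i assume "i \<in> {1..<length ?vs}"
  hence i: "1 \<le> i" "i < length ?vs" by auto
  have i1: "i - 1 < length ?vs" using i by simp
  have less: "?vs ! (i - 1) < ?vs ! i"
    using sorted_wrt_less_nth_less_iff[OF value_list_sorted i1 i(2)] i by simp
  obtain u v where u: "u \<in> {1..n}" "D u = ?vs ! (i - 1)" and v: "v \<in> {1..n}" "D v = ?vs ! i"
    using nth_mem[OF i1] nth_mem[OF i(2)] set_value_list[of n D] by (metis imageE)
  have "D u < D v" using less u v by simp
  hence "D v - D u < interval_weight n D (D u) (D v)"
    using assms u v unfolding normal_configs_def order_reversing_iff_gap by blast
  moreover have "D w \<in> set ?vs" if "w \<in> {1..n}" for w using that set_value_list by auto
  hence "{w\<in>{1..n}. D u \<le> D w \<and> D w < D v} = ?bs ! (i - 1)"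
    and "{w\<in>{1..n}. D u < D w \<and> D w \<le> D v} = ?bs ! i"
    using sorted_wrt_less_between_consecutive[OF value_list_sorted i] i1 i u(2) v(2)
    by (auto simp: blocks_and_gaps_fst)
  ultimately show "?vs ! i - ?vs ! (i - 1) \<in>
      {1..int (card (?bs ! (i - 1))) + int (card (?bs ! i)) - 1}"
    using less u(2) v(2) by (simp add: interval_weight_def)
qed

lemma height_telescope: "height (\<lambda>i. f i - f (i - 1)) j = f j - f 0"
  by (induction j) (auto simp: height_Suc)

lemma config_of_blocks_and_gaps:
  assumes n: "n \<ge> 1" and D: "D \<in> normal_configs n"
  shows "config_of n (blocks_and_gaps n D) = D"
proof
  fix v
  let ?vs = "value_list n D"
  show "config_of n (blocks_and_gaps n D) v = D v"
  proof (cases "v \<in> {1..n}")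
    case True
    obtain j where j: "j < length ?vs" "?vs ! j = D v"
      using True set_value_list[of n D] by (metis imageI in_set_conv_nth)
    have index: "block_index (fst (blocks_and_gaps n D)) v = j"
      using j True by (intro block_index_eqI[OF blocks_and_gaps_partition]) (auto simp: blocks_and_gaps_fst)
    have "height (snd (blocks_and_gaps n D)) j = height (\<lambda>i. ?vs ! i - ?vs ! (i - 1)) j"
      unfolding height_def blocks_and_gaps_snd using j(1) by (intro sum.cong) auto
    also have "\<dots> = D v"
      using height_telescope[of "(!) ?vs" j] j(2) value_list_first[OF n D] by simp
    finally show ?thesis using True index by (simp add: config_of_def case_prod_beta)
  next
    case False
    with D show ?thesis by (auto simp: config_of_def case_prod_beta normal_configs_def configs_def)
  qed
qed

lemma value_list_config_of:
  assumes bs: "bs \<in> ordered_set_partitions {1..n}" and h: "h \<in> gap_vectors bs"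
  shows "value_list n (config_of n (bs, h)) = map (height h) [0..<length bs]"
proof -
  let ?D = "config_of n (bs, h)"
  let ?hs = "map (height h) [0..<length bs]"
  have "?D ` {1..n} = height h ` {..<length bs}"
  proof (intro set_eqI iffI)
    fix y assume "y \<in> ?D ` {1..n}"
    thus "y \<in> height h ` {..<length bs}"
      using block_index_less[OF bs] by (auto simp: config_of_def)
  next
    fix y assume "y \<in> height h ` {..<length bs}"
    then obtain j where j: "j < length bs" "y = height h j" by auto
    then obtain w where "w \<in> bs ! j" using ordered_set_partitions_nonempty[OF bs] by blast
    hence "w \<in> {1..n}" "block_index bs w = j" using block_index_eq_iff[OF bs j(1)] by auto
    thus "y \<in> ?D ` {1..n}" using j(2) by (auto simp: config_of_def intro!: image_eqI[of _ _ w])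
  qed
  moreover have sorted: "sorted_wrt (<) ?hs"
    unfolding sorted_wrt_iff_nth_less using height_strict_mono[OF h] by simp
  moreover have "length ?hs = card (height h ` {..<length bs})"
    using sorted strict_sorted_iff distinct_card by (metis atLeast_upt set_map)
  ultimately show ?thesis
    unfolding value_list_def by (subst sorted_list_of_set_unique[symmetric]) (auto simp: atLeast_upt)
qed

lemma blocks_and_gaps_config_of:
  assumes bs: "bs \<in> ordered_set_partitions {1..n}" and h: "h \<in> gap_vectors bs"
  shows "blocks_and_gaps n (config_of n (bs, h)) = (bs, h)"
proof -
  let ?D = "config_of n (bs, h)"
  note value_list_eq = value_list_config_of[OF bs h]
  have "fst (blocks_and_gaps n ?D) = bs"
  proof (rule nth_equalityI)
    fix j assume "j < length (fst (blocks_and_gaps n ?D))"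
    hence j: "j < length bs" by (simp add: value_list_eq)
    have "height h (block_index bs v) = height h j \<longleftrightarrow> block_index bs v = j" if "v \<in> {1..n}" for v
      using height_le_iff[OF h block_index_less[OF bs that] j]
        height_le_iff[OF h j block_index_less[OF bs that]]
      by (metis order.antisym order.refl)
    hence "{v\<in>{1..n}. ?D v = height h j} = {v\<in>{1..n}. block_index bs v = j}"
      by (auto simp: config_of_def)
    also have "\<dots> = bs ! j" using block_index_eq_iff[OF bs j] by blast
    finally show "fst (blocks_and_gaps n ?D) ! j = bs ! j"
      using j by (simp add: blocks_and_gaps_fst value_list_eq)
  qed (simp add: value_list_eq)
  moreover have "snd (blocks_and_gaps n ?D) = h"
  proof
    fix i
    show "snd (blocks_and_gaps n ?D) i = h i"
    proof (cases "i \<in> {1..<length bs}")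
      case True
      then obtain k where "i = Suc k" by (cases i) auto
      with True show ?thesis by (simp add: blocks_and_gaps_snd value_list_eq height_Suc)
    next
      case False
      with PiE_arb[OF h[unfolded gap_vectors_def]] show ?thesis
        by (auto simp: blocks_and_gaps_snd value_list_eq)
    qed
  qed
  ultimately show ?thesis by (simp add: prod_eq_iff)
qed

lemma bij_betw_blocks_and_gaps:
  assumes "n \<ge> 1"
  shows "bij_betw (blocks_and_gaps n) (normal_configs n)
           (SIGMA bs:ordered_set_partitions {1..n}. gap_vectors bs)"
proof (rule bij_betw_byWitness[where f' = "config_of n"])
  show "\<forall>D\<in>normal_configs n. config_of n (blocks_and_gaps n D) = D"
    using config_of_blocks_and_gaps[OF assms] by blast
  show "\<forall>p\<in>SIGMA bs:ordered_set_partitions {1..n}. gap_vectors bs. blocks_and_gaps n (config_of n p) = p"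
    using blocks_and_gaps_config_of by auto
  show "blocks_and_gaps n ` normal_configs n \<subseteq> (SIGMA bs:ordered_set_partitions {1..n}. gap_vectors bs)"
  proof (rule image_subsetI)
    fix D assume "D \<in> normal_configs n"
    thus "blocks_and_gaps n D \<in> (SIGMA bs:ordered_set_partitions {1..n}. gap_vectors bs)"
      using blocks_and_gaps_partition blocks_and_gaps_gap_vector by (metis SigmaI prod.collapse)
  qed
  show "config_of n ` (SIGMA bs:ordered_set_partitions {1..n}. gap_vectors bs) \<subseteq> normal_configs n"
    using config_of_in_normal_configs[OF assms] by auto
qed

lemma finite_gap_vectors: "finite (gap_vectors bs)"
  by (simp add: gap_vectors_def finite_PiE)

lemma card_gap_vectors:
  "card (gap_vectors bs) = (\<Prod>i\<in>{1..<length bs}. card (bs ! (i - 1)) + card (bs ! i) - 1)"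
proof -
  have "nat (int a + int b - 1) = a + b - 1" for a b by arith
  thus ?thesis by (simp add: gap_vectors_def card_PiE)
qed

section \<open>Counting equivalence classes\<close>

lemma equiv_config_equiv: "equiv (configs n) (config_equiv n)"
proof (rule equivI)
  show "refl_on (configs n) (config_equiv n)"
    by (rule refl_onI) (auto simp: config_equiv_def intro: exI[of _ 0])
  show "sym (config_equiv n)"
  proof (rule symI)
    fix D D' assume "(D, D') \<in> config_equiv n"
    then obtain c where "D \<in> configs n" "D' \<in> configs n" "\<forall>v\<in>{1..n}. D' v = D v + c"
      by (auto simp: config_equiv_def)
    thus "(D', D) \<in> config_equiv n" unfolding config_equiv_def by (auto intro!: exI[of _ "- c"])
  qed
  show "trans (config_equiv n)"
  proof (rule transI)
    fix D D' D'' assume "(D, D') \<in> config_equiv n" "(D', D'') \<in> config_equiv n"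
    then obtain c d where "D \<in> configs n" "D'' \<in> configs n"
      "\<forall>v\<in>{1..n}. D' v = D v + c" "\<forall>v\<in>{1..n}. D'' v = D' v + d"
      unfolding config_equiv_def by blast
    thus "(D, D'') \<in> config_equiv n" unfolding config_equiv_def by (auto intro!: exI[of _ "c + d"])
  qed
qed (auto simp: config_equiv_def)

lemma normal_configs_equiv_eq:
  assumes "n \<ge> 1" "D \<in> normal_configs n" "D' \<in> normal_configs n" "(D, D') \<in> config_equiv n"
  shows "D = D'"
proof -
  obtain c where c: "\<forall>v\<in>{1..n}. D' v = D v + c"
    using assms(4) by (auto simp: config_equiv_def)
  have zero: "\<exists>w\<in>{1..n}. E w = 0" if "E \<in> normal_configs n" for E
  proof -
    have "Min (E ` {1..n}) \<in> E ` {1..n}" using assms(1) by (intro Min_in) auto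
    with that show ?thesis by (auto simp: normal_configs_def)
  qed
  obtain w w' where w: "w \<in> {1..n}" "D w = 0" and w': "w' \<in> {1..n}" "D' w' = 0"
    using zero[OF assms(2)] zero[OF assms(3)] by blast
  have nonneg: "0 \<le> E v" if "E \<in> normal_configs n" "v \<in> {1..n}" for E v
    using that Min_le[of "E ` {1..n}" "E v"] by (auto simp: normal_configs_def)
  have "0 \<le> c" using nonneg[OF assms(3) w(1)] c w by simp
  moreover have "c \<le> 0" using nonneg[OF assms(2) w'(1)] c w' by force
  ultimately have "c = 0" by simp
  show ?thesis
  proof
    fix v
    show "D v = D' v"
      using c \<open>c = 0\<close> assms(2,3)
      by (cases "v \<in> {1..n}") (auto simp: normal_configs_def configs_def)
  qed
qed

lemma ex_normal_config_equiv:
  assumes "n \<ge> 1" "period_config n D"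
  shows "\<exists>D'\<in>normal_configs n. (D, D') \<in> config_equiv n"
proof -
  define m where "m = Min (D ` {1..n})"
  define D' where "D' = (\<lambda>v. if v \<in> {1..n} then D v + (- m) else 0)"
  have D: "D \<in> configs n" "order_reversing n D"
    using assms(2) period_config_iff_order_reversing by auto
  have "m \<in> D ` {1..n}" "\<forall>v\<in>{1..n}. m \<le> D v"
    using assms(1) by (auto simp: m_def)
  hence "Min (D' ` {1..n}) = 0"
    by (intro Min_eqI) (auto simp: D'_def)
  moreover have "order_reversing n D'"
    unfolding D'_def by (rule order_reversing_shift[OF D(2)])
  ultimately have "D' \<in> normal_configs n" by (simp add: normal_configs_def configs_def D'_def)
  moreover have "(D, D') \<in> config_equiv n"
    using D(1) by (auto simp: config_equiv_def configs_def D'_def)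
  ultimately show ?thesis by blast
qed

lemma bij_betw_normal_configs_classes:
  assumes "n \<ge> 1"
  shows "bij_betw (\<lambda>D. config_equiv n `` {D}) (normal_configs n)
           ({D. period_config n D} // config_equiv n)"
proof -
  have normal: "D \<in> configs n" "period_config n D" if "D \<in> normal_configs n" for D
    using that period_config_iff_order_reversing by (auto simp: normal_configs_def)
  have "inj_on (\<lambda>D. config_equiv n `` {D}) (normal_configs n)"
    using normal_configs_equiv_eq[OF assms] eq_equiv_class_iff[OF equiv_config_equiv] normal
    by (intro inj_onI) blast
  moreover have "(\<lambda>D. config_equiv n `` {D}) ` normal_configs n = {D. period_config n D} // config_equiv n"
  proof (intro equalityI subsetI)
    fix X assume "X \<in> (\<lambda>D. config_equiv n `` {D}) ` normal_configs n"
    thus "X \<in> {D. period_config n D} // config_equiv n" using normal by (auto intro: quotientI)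
  next
    fix X assume "X \<in> {D. period_config n D} // config_equiv n"
    then obtain D where D: "X = config_equiv n `` {D}" "period_config n D" by (auto elim: quotientE)
    then obtain D' where "D' \<in> normal_configs n" "(D, D') \<in> config_equiv n"
      using ex_normal_config_equiv[OF assms] by blast
    thus "X \<in> (\<lambda>D. config_equiv n `` {D}) ` normal_configs n"
      using D(1) equiv_class_eq[OF equiv_config_equiv] by blast
  qed
  ultimately show ?thesis by (simp add: bij_betw_def)
qed

theorem theorem5p1:
  fixes n :: nat
  assumes "n \<ge> 1"
  shows "finite ({D. period_config n D} // config_equiv n) \<and>
         card ({D. period_config n D} // config_equiv n) =
           (\<Sum>bs\<in>ordered_set_partitions {1..n}.
              \<Prod>i\<in>{1..<length bs}. card (bs ! (i - 1)) + card (bs ! i) - 1)"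
proof -
  let ?classes = "{D. period_config n D} // config_equiv n"
  let ?pairs = "SIGMA bs:ordered_set_partitions {1..n}. gap_vectors bs"
  have partitions: "finite (ordered_set_partitions {1..n})"
    by (simp add: finite_ordered_set_partitions)
  have "bij_betw (blocks_and_gaps n \<circ> inv_into (normal_configs n) (\<lambda>D. config_equiv n `` {D}))
      ?classes ?pairs"
    using bij_betw_inv_into[OF bij_betw_normal_configs_classes[OF assms]]
      bij_betw_blocks_and_gaps[OF assms] by (rule bij_betw_trans)
  moreover have "finite ?pairs" using partitions by (simp add: finite_gap_vectors)
  moreover have "card ?pairs = (\<Sum>bs\<in>ordered_set_partitions {1..n}. card (gap_vectors bs))"
    using partitions by (simp add: card_SigmaI finite_gap_vectors)
  ultimately show ?thesis by (simp add: bij_betw_finite bij_betw_same_card card_gap_vectors)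
qed

end
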